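(* Let $X,Y$ be Banach spaces, let $F:X\rightrightarrows Y$ be a closed convex set-valued mapping, let $A\subset X$ be a closed convex set, let $\bar y\in Y$, put $S:=F^{-1}(\bar y)\cap A$, and let $\bar x\in S$. Then $$\frac{1}{\eta_A(F,\bar x,\bar y)}=\inf\{\tau>0:\exists\delta>0\text{ such that } N(S,x)\cap B_{X^*}\subset\tau\big(D^*F(x,\bar y)(B_{Y^*})+N(A,x)\cap B_{X^*}\big)\text{ for every }x\in S\cap B(\bar x,\delta)\}.$$
   Context: $B_X,B_Y,B_{X^*},B_{Y^*}$ are the closed unit balls of $X,Y$ and their duals; $B(x,\delta)$ is the open ball. $F$ closed convex means ${\rm gph}(F)=\{(x,y):y\in F(x)\}$ is closed and convex in $X\times Y$. For a closed convex set $C$ and $a\in C$: the contingent cone $T(C,a)$ is the set of $v$ for which there exist $v_n\to v$, $t_n\to0^+$ with $a+t_nv_n\in C$ for all $n$; the normal cone is $N(C,a):=\{x^*\in X^*:\langle x^*,x-a\rangle\le0\ \forall x\in C\}$. For $(x,y)\in{\rm gph}(F)$: $DF^{-1}(y,x)(v):=\{u\in X:(u,v)\in T({\rm gph}(F),(x,y))\}$, $DF^{-1}(y,x)(W)=\bigcup_{v\in W}DF^{-1}(y,x)(v)$ for $W\subset Y$; the coderivative is $D^*F(x,y)(y^* ):=\{x^*\in X^*:(x^*,-y^* )\in N({\rm gph}(F),(x,y))\}$ and $D^*F(x,y)(B_{Y^*})=\bigcup_{y^*\in B_{Y^*}}D^*F(x,y)(y^* )$. $\eta_A(F,\bar x,\bar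 y):=\sup\{\eta>0:\exists\delta>0$ such that for every $x\in S\cap B(\bar x,\delta)$: $DF^{-1}(\bar y,x)(\eta_1B_Y)\cap(T(A,x)+\eta_2B_X)\subset T(S,x)+B_X$ for all $\eta_1,\eta_2\ge0$ with $\eta_1+\eta_2<\eta\}$, with $\sup\emptyset=0$, $\inf\emptyset=+\infty$, $1/0=+\infty$. *)

theory Defs
  imports "HOL-Analysis.Analysis"
begin

definition gph :: "('a \<Rightarrow> 'b set) \<Rightarrow> ('a \<times> 'b) set" where
  "gph F = {(x, y). y \<in> F x}"

definition contingent_cone :: "'a::real_normed_vector set \<Rightarrow> 'a \<Rightarrow> 'a set" where
  "contingent_cone C a = {v. \<exists>vs ts. vs \<longlonglongrightarrow> v \<and> ts \<longlonglongrightarrow> 0 \<and> (\<forall>n. ts n > (0::real))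
       \<and> (\<forall>n. a + ts n *\<^sub>R vs n \<in> C)}"

definition normal_cone :: "'a::real_normed_vector set \<Rightarrow> 'a \<Rightarrow> ('a \<Rightarrow>\<^sub>L real) set" where
  "normal_cone C a = {xs. \<forall>x\<in>C. blinfun_apply xs (x - a) \<le> 0}"

definition graph_deriv_inv ::
  "('a::real_normed_vector \<Rightarrow> 'b::real_normed_vector set) \<Rightarrow> 'b \<Rightarrow> 'a \<Rightarrow> 'b \<Rightarrow> 'a set" where
  "graph_deriv_inv F y x v = {u. (u, v) \<in> contingent_cone (gph F) (x, y)}"

definition graph_deriv_inv_set ::
  "('a::real_normed_vector \<Rightarrow> 'b::real_normed_vector set) \<Rightarrow> 'b \<Rightarrow> 'a \<Rightarrow> 'b set \<Rightarrow> 'a set" where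
  "graph_deriv_inv_set F y x W = (\<Union>v\<in>W. graph_deriv_inv F y x v)"

text \<open>Coderivative D*F(x,y)(y*): (x*,-y*) \<in> N(gph F,(x,y)), where the dual of X \<times> Y
  is identified with X* \<times> Y* via the pairing ((x*,y*),(u,v)) = x*(u) + y*(v).\<close>
definition coderiv ::
  "('a::real_normed_vector \<Rightarrow> 'b::real_normed_vector set) \<Rightarrow> 'a \<Rightarrow> 'b \<Rightarrow> ('b \<Rightarrow>\<^sub>L real) \<Rightarrow> ('a \<Rightarrow>\<^sub>L real) set" where
  "coderiv F x y ys = {xs. \<forall>(u, v)\<in>gph F.
      blinfun_apply xs (u - x) + blinfun_apply (- ys) (v - y) \<le> 0}"

definition coderiv_set ::
  "('a::real_normed_vector \<Rightarrow> 'b::real_normed_vector set) \<Rightarrow> 'a \<Rightarrow> 'b \<Rightarrow> ('b \<Rightarrow>\<^sub>L real) set \<Rightarrow> ('a \<Rightarrow>\<^sub>L real) set" where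
  "coderiv_set F x y W = (\<Union>ys\<in>W. coderiv F x y ys)"

definition msum :: "'a::real_vector set \<Rightarrow> 'a set \<Rightarrow> 'a set" where
  "msum P Q = {p + q | p q. p \<in> P \<and> q \<in> Q}"

definition sscale :: "real \<Rightarrow> 'a::real_vector set \<Rightarrow> 'a set" where
  "sscale t P = (\<lambda>z. t *\<^sub>R z) ` P"

definition eta_set ::
  "('a::real_normed_vector \<Rightarrow> 'b::real_normed_vector set) \<Rightarrow> 'a set \<Rightarrow> 'a \<Rightarrow> 'b \<Rightarrow> real set" where
  "eta_set F A x0 y0 = {\<eta>. \<eta> > 0 \<and> (\<exists>\<delta>>0. \<forall>x \<in> ({x. y0 \<in> F x} \<inter> A) \<inter> ball x0 \<delta>.
      \<forall>\<eta>1 \<eta>2. \<eta>1 \<ge> 0 \<and> \<eta>2 \<ge> 0 \<and> \<eta>1 + \<eta>2 < \<eta> \<longrightarrow>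
        graph_deriv_inv_set F y0 x (sscale \<eta>1 (cball 0 1))
          \<inter> msum (contingent_cone A x) (sscale \<eta>2 (cball 0 1))
        \<subseteq> msum (contingent_cone ({x. y0 \<in> F x} \<inter> A) x) (cball 0 1))}"

text \<open>\<eta>_A(F,x0,y0) as an extended real, with sup of the empty set equal to 0.\<close>
definition eta_A ::
  "('a::real_normed_vector \<Rightarrow> 'b::real_normed_vector set) \<Rightarrow> 'a set \<Rightarrow> 'a \<Rightarrow> 'b \<Rightarrow> ereal" where
  "eta_A F A x0 y0 = (if eta_set F A x0 y0 = {} then 0 else Sup (ereal ` eta_set F A x0 y0))"

definition ereal_recip :: "ereal \<Rightarrow> ereal" where
  "ereal_recip t = (if t = 0 then \<infinity> else if t = \<infinity> then 0 else 1 / t)"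

end

theory Submission
  imports Defs
begin

text \<open>
  The two sides are compared pointwise. At every \<open>x \<in> S\<close> the tangential condition with
  constant \<open>\<eta>\<close> (the one defining \<open>\<eta>\<^sub>A\<close>) and the dual condition with constant \<open>\<tau>\<close> are
  dual to each other: the dual condition with \<open>\<tau>\<close> gives the tangential one with \<open>\<eta> = 1/\<tau>\<close>,
  and the tangential one with \<open>\<eta>\<close> gives the dual one for every \<open>\<tau> > 1/\<eta>\<close>; the
  reciprocal of the supremum then equals the infimum.

  Dual to tangential: if \<open>u \<in> DF\<^sup>-\<^sup>1(\<eta>\<^sub>1 B) \<inter> (T(A,x) + \<eta>\<^sub>2 B)\<close> were at distance
  at least 1 from the convex cone \<open>T(S,x)\<close>, Hahn-Banach would separate it by a functional
  \<open>x\<^sup>* \<in> N(S,x) \<inter> B\<close> with \<open>x\<^sup>*(u) \<ge> 1\<close>; writing \<open>x\<^sup>* = \<tau>(x\<^sub>1\<^sup>* + x\<^sub>2\<^sup>*)\<close> with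
  \<open>x\<^sub>1\<^sup>* \<in> D\<^sup>*F(B)\<close> and \<open>x\<^sub>2\<^sup>* \<in> N(A,x) \<inter> B\<close> gives \<open>x\<^sup>*(u) \<le> \<tau>(\<eta>\<^sub>1 + \<eta>\<^sub>2) < 1\<close>.

  Tangential to dual: for \<open>x\<^sup>* \<in> N(S,x) \<inter> B\<close>, scaling the tangential condition yields
  \<open>x\<^sup>*(u) \<le> \<tau>(\<parallel>v\<parallel> + \<parallel>z\<parallel>)\<close> whenever \<open>(u,v) \<in> T(gph F)\<close> and \<open>u - z \<in> T(A,x)\<close>.
  A sandwich version of Hahn-Banach turns this into functionals \<open>y\<^sup>*, z\<^sup>*\<close> of norm at most
  \<open>\<tau>\<close> with \<open>x\<^sup>*(u) \<le> y\<^sup>*(v) + z\<^sup>*(u)\<close> on \<open>T(gph F)\<close> and \<open>z\<^sup>* \<le> 0\<close> on \<open>T(A,x)\<close>, which is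
  the required decomposition \<open>x\<^sup>* = \<tau>(\<tau>\<^sup>-\<^sup>1(x\<^sup>* - z\<^sup>*) + \<tau>\<^sup>-\<^sup>1z\<^sup>*)\<close>.
\<close>

section \<open>Sublinear functionals, Hahn-Banach and separation\<close>

definition sublinear :: "('a::real_vector \<Rightarrow> real) \<Rightarrow> bool" where
  "sublinear p \<longleftrightarrow>
     (\<forall>x y. p (x + y) \<le> p x + p y) \<and> (\<forall>c x. 0 < c \<longrightarrow> p (c *\<^sub>R x) = c * p x)"

lemma sublinearD:
  assumes "sublinear p"
  shows sublinear_add: "p (x + y) \<le> p x + p y"
    and sublinear_scaleR: "0 < c \<Longrightarrow> p (c *\<^sub>R x) = c * p x"
  using assms by (auto simp: sublinear_def)

lemma sublinear_0: "sublinear p \<Longrightarrow> p 0 = 0"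
  using sublinear_scaleR[of p 2 0] by simp

lemma sublinear_scaled_norm_sum:
  assumes "0 \<le> K"
  shows "sublinear (\<lambda>w. K * (norm (fst w) + norm (snd w)))"
  unfolding sublinear_def
proof (intro conjI allI impI)
  fix a b :: "'a::real_normed_vector \<times> 'b::real_normed_vector"
  have "norm (fst (a + b)) + norm (snd (a + b))
      \<le> (norm (fst a) + norm (snd a)) + (norm (fst b) + norm (snd b))"
    using norm_triangle_ineq[of "fst a" "fst b"] norm_triangle_ineq[of "snd a" "snd b"] by simp
  then show "K * (norm (fst (a + b)) + norm (snd (a + b)))
      \<le> K * (norm (fst a) + norm (snd a)) + K * (norm (fst b) + norm (snd b))"
    using mult_left_mono[OF _ assms] by (simp add: distrib_left[symmetric])
qed (simp add: algebra_simps)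

lemma sublinear_extension_constant:
  fixes p :: "'a::real_vector \<Rightarrow> real"
  assumes p: "sublinear p" and M: "subspace M" and dom: "\<forall>(w, r)\<in>M. r \<le> p w"
  obtains c where "\<And>w r. (w, r) \<in> M \<Longrightarrow> r + c \<le> p (w + x)"
    and "\<And>w r. (w, r) \<in> M \<Longrightarrow> r - c \<le> p (w - x)"
proof -
  define L where "L = {r - p (w - x) | w r. (w, r) \<in> M}"
  have L_le: "l \<le> p (w + x) - r" if "l \<in> L" "(w, r) \<in> M" for l w r
  proof -
    obtain w' r' where l: "l = r' - p (w' - x)" "(w', r') \<in> M"
      using \<open>l \<in> L\<close> by (auto simp: L_def)
    have "r' + r \<le> p (w' + w)"
      using dom subspace_add[OF M l(2) \<open>(w, r) \<in> M\<close>] by auto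
    also have "\<dots> \<le> p (w' - x) + p (w + x)"
      using sublinear_add[OF p, of "w' - x" "w + x"] by (simp add: algebra_simps)
    finally show ?thesis using l(1) by simp
  qed
  have "0 - p (0 - x) \<in> L"
    using subspace_0[OF M] unfolding L_def zero_prod_def by blast
  then have L_ne: "L \<noteq> {}" by blast
  have "bdd_above L"
    by (rule bdd_aboveI[of _ "p x"]) (use L_le[OF _ subspace_0[OF M, unfolded zero_prod_def]] in simp)
  show ?thesis
  proof
    show "r + Sup L \<le> p (w + x)" if "(w, r) \<in> M" for w r
      using cSup_least[OF L_ne L_le[OF _ that]] by simp
    show "r - Sup L \<le> p (w - x)" if "(w, r) \<in> M" for w r
    proof -
      have "r - p (w - x) \<in> L" using that by (auto simp: L_def)
      then show ?thesis using cSup_upper[OF _ \<open>bdd_above L\<close>] by fastforce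
    qed
  qed
qed

lemma sublinear_extend_subspace:
  fixes p :: "'a::real_vector \<Rightarrow> real"
  assumes p: "sublinear p" and M: "subspace M" and dom: "\<forall>(w, r)\<in>M. r \<le> p w"
  obtains c where "\<forall>(w, r)\<in>span (insert (x, c) M). r \<le> p w"
proof -
  obtain c where c_upper: "\<And>w r. (w, r) \<in> M \<Longrightarrow> r + c \<le> p (w + x)"
    and c_lower: "\<And>w r. (w, r) \<in> M \<Longrightarrow> r - c \<le> p (w - x)"
    using sublinear_extension_constant[OF p M dom, where x = x] by blast
  have extended: "r + t * c \<le> p (w + t *\<^sub>R x)" if "(w, r) \<in> M" for w r t
  proof -
    consider "t = 0" | "t > 0" | "t < 0" by linarith
    then show ?thesis
    proof cases
      case 1
      then show ?thesis using dom that by auto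
    next
      case 2
      have "(inverse t *\<^sub>R w, inverse t * r) \<in> M" using subspace_scale[OF M that, of "inverse t"] by simp
      then have "t * (inverse t * r + c) \<le> t * p (inverse t *\<^sub>R w + x)"
        using c_upper 2 by (intro mult_left_mono) auto
      also have "\<dots> = p (w + t *\<^sub>R x)"
        using sublinear_scaleR[OF p 2, of "inverse t *\<^sub>R w + x"] 2 by (simp add: scaleR_add_right)
      finally show ?thesis using 2 by (simp add: algebra_simps)
    next
      case 3
      have "(inverse (- t) *\<^sub>R w, inverse (- t) * r) \<in> M"
        using subspace_scale[OF M that, of "inverse (- t)"] by simp
      then have "(- t) * (inverse (- t) * r - c) \<le> (- t) * p (inverse (- t) *\<^sub>R w - x)"
        using c_lower 3 by (intro mult_left_mono) auto
      also have "\<dots> = p (w + t *\<^sub>R x)"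
        using sublinear_scaleR[OF p, of "- t" "inverse (- t) *\<^sub>R w - x"] 3
        by (simp add: scaleR_diff_right)
      finally show ?thesis using 3 by (simp add: algebra_simps)
    qed
  qed
  have "r \<le> p w" if wr: "(w, r) \<in> span (insert (x, c) M)" for w r
  proof -
    obtain t where "(w - t *\<^sub>R x, r - t * c) \<in> M"
      using wr span_eq_iff[THEN iffD2, OF M] by (auto simp: span_breakdown_eq)
    from extended[OF this, of t] show ?thesis by simp
  qed
  then show ?thesis by (intro that) auto
qed

lemma subspace_Union_chain:
  assumes "C \<noteq> {}" and subspaces: "\<And>X. X \<in> C \<Longrightarrow> subspace X"
    and comparable: "\<And>X Y. X \<in> C \<Longrightarrow> Y \<in> C \<Longrightarrow> X \<subseteq> Y \<or> Y \<subseteq> X"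
  shows "subspace (\<Union>C)"
  unfolding subspace_def
proof (intro conjI ballI allI)
  show "0 \<in> \<Union>C"
    using assms(1) subspaces subspace_0 by blast
next
  fix u v assume "u \<in> \<Union>C" "v \<in> \<Union>C"
  then obtain X where "X \<in> C" "u \<in> X" "v \<in> X"
    using comparable by blast
  then show "u + v \<in> \<Union>C"
    using subspaces subspace_add by blast
next
  fix c u assume "u \<in> \<Union>C"
  then obtain X where "X \<in> C" "u \<in> X" by blast
  then show "c *\<^sub>R u \<in> \<Union>C"
    using subspaces subspace_scale by blast
qed

lemma dominated_graph_linear:
  fixes p :: "'a::real_vector \<Rightarrow> real"
  assumes p: "sublinear p" and M: "subspace M" and dom: "\<forall>(w, r)\<in>M. r \<le> p w"
    and total: "\<And>x. \<exists>r. (x, r) \<in> M"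
  obtains l where "linear l" "\<And>x. l x \<le> p x"
proof -
  have unique: "r = r'" if "(x, r) \<in> M" "(x, r') \<in> M" for x r r'
  proof -
    have "(0, r - r') \<in> M" "(0, r' - r) \<in> M"
      using subspace_diff[OF M that] subspace_diff[OF M that(2,1)] by simp_all
    then have "r - r' \<le> p 0" "r' - r \<le> p 0" using dom by auto
    then show ?thesis using sublinear_0[OF p] by linarith
  qed
  define l where "l x = (SOME r. (x, r) \<in> M)" for x
  have l: "(x, l x) \<in> M" for x using someI_ex[OF total] by (simp add: l_def)
  have "linear l"
  proof (rule linearI)
    show "l (u + v) = l u + l v" for u v
      using unique[OF l, of "u + v" "l u + l v"] subspace_add[OF M l l] by simp
    show "l (c *\<^sub>R u) = c *\<^sub>R l u" for c u
      using unique[OF l, of "c *\<^sub>R u" "c * l u"] subspace_scale[OF M l] by simp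
  qed
  moreover have "l x \<le> p x" for x using dom l by blast
  ultimately show ?thesis by (rule that)
qed

lemma sublinear_dominates_linear:
  fixes p :: "'a::real_vector \<Rightarrow> real"
  assumes p: "sublinear p"
  obtains l where "linear l" "\<And>x. l x \<le> p x"
proof -
  define D where "D = {M :: ('a \<times> real) set. subspace M \<and> (\<forall>(w, r)\<in>M. r \<le> p w)}"
  have "\<exists>U\<in>D. \<forall>X\<in>C. X \<subseteq> U" if C: "C \<in> chains D" for C
  proof (cases "C = {}")
    case True
    have "{0} \<in> D" using sublinear_0[OF p] by (simp add: D_def) (simp add: zero_prod_def)
    then show ?thesis using True by blast
  next
    case False
    have CD: "C \<subseteq> D" and "\<And>X Y. X \<in> C \<Longrightarrow> Y \<in> C \<Longrightarrow> X \<subseteq> Y \<or> Y \<subseteq> X"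
      using C by (auto simp: chains_def chain_subset_def)
    then have "subspace (\<Union>C)"
      using subspace_Union_chain[OF False] by (auto simp: D_def)
    then have "\<Union>C \<in> D" using CD by (auto simp: D_def)
    then show ?thesis by blast
  qed
  then have "\<forall>C\<in>chains D. \<exists>U\<in>D. \<forall>X\<in>C. X \<subseteq> U" by blast
  from Zorn_Lemma2[OF this] obtain M
    where "M \<in> D" and M_max: "\<And>X. X \<in> D \<Longrightarrow> M \<subseteq> X \<Longrightarrow> X = M"
    by blast
  have M: "subspace M" and dom: "\<forall>(w, r)\<in>M. r \<le> p w"
    using \<open>M \<in> D\<close> by (auto simp: D_def)
  have "\<exists>r. (x, r) \<in> M" for x
  proof -
    obtain c where c: "\<forall>(w, r)\<in>span (insert (x, c) M). r \<le> p w"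
      using sublinear_extend_subspace[OF p M dom] .
    have "M \<subseteq> span (insert (x, c) M)"
      using span_superset[of "insert (x, c) M"] by blast
    moreover have "span (insert (x, c) M) \<in> D"
      using c by (simp add: D_def)
    ultimately have "span (insert (x, c) M) = M"
      using M_max by blast
    moreover have "(x, c) \<in> span (insert (x, c) M)"
      by (simp add: span_base)
    ultimately show ?thesis by auto
  qed
  with dominated_graph_linear[OF p M dom] show ?thesis
    using that by blast
qed

text \<open>Any linear minorant of \<open>cone_infimum p H\<close> lies below \<open>p\<close> (take \<open>(0, 0) \<in> H\<close>) and
  above \<open>s\<close> at \<open>d\<close> for \<open>(d, s) \<in> H\<close> (evaluate at \<open>- d\<close>).\<close>

definition cone_infimum :: "('a::real_vector \<Rightarrow> real) \<Rightarrow> ('a \<times> real) set \<Rightarrow> 'a \<Rightarrow> real" where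
  "cone_infimum p H x = Inf {p (x + d) - s | d s. (d, s) \<in> H}"

lemma cone_infimum_le:
  assumes p: "sublinear p" and H_le: "\<And>d s. (d, s) \<in> H \<Longrightarrow> s \<le> p d" and "(d, s) \<in> H"
  shows "cone_infimum p H x \<le> p (x + d) - s"
proof -
  have bdd: "bdd_below {p (x + d) - s | d s. (d, s) \<in> H}"
  proof (rule bdd_belowI[of _ "- p (- x)"])
    fix e assume "e \<in> {p (x + d) - s | d s. (d, s) \<in> H}"
    then obtain d s where "e = p (x + d) - s" "(d, s) \<in> H" by blast
    moreover have "p d \<le> p (x + d) + p (- x)"
      using sublinear_add[OF p, of "x + d" "- x"] by simp
    ultimately show "- p (- x) \<le> e" using H_le by fastforce
  qed
  show ?thesis
    unfolding cone_infimum_def by (rule cInf_lower[OF _ bdd]) (use \<open>(d, s) \<in> H\<close> in blast)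
qed

lemma cone_infimum_greatest:
  assumes "convex_cone H" and "\<And>d s. (d, s) \<in> H \<Longrightarrow> b \<le> p (x + d) - s"
  shows "b \<le> cone_infimum p H x"
proof -
  have "(0, 0) \<in> H"
    using assms(1) by (simp add: convex_cone_iff zero_prod_def)
  then have "{p (x + d) - s | d s. (d, s) \<in> H} \<noteq> {}" by blast
  then show ?thesis
    unfolding cone_infimum_def by (rule cInf_greatest) (use assms(2) in auto)
qed

lemma cone_infimum_add:
  assumes p: "sublinear p" and H: "convex_cone H" and H_le: "\<And>d s. (d, s) \<in> H \<Longrightarrow> s \<le> p d"
  shows "cone_infimum p H (x + y) \<le> cone_infimum p H x + cone_infimum p H y"
proof -
  let ?q = "cone_infimum p H"
  have q_le: "?q x \<le> p (x + d) - s" if "(d, s) \<in> H" for x d s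
    using p H_le that by (rule cone_infimum_le)
  note q_ge = cone_infimum_greatest[OF H]
  have "?q (x + y) - (p (y + d2) - s2) \<le> ?q x" if d2: "(d2, s2) \<in> H" for d2 s2
  proof (rule q_ge)
    fix d1 s1 assume d1: "(d1, s1) \<in> H"
    have "?q (x + y) \<le> p (x + y + (d1 + d2)) - (s1 + s2)"
      using q_le convex_cone_add[OF H d1 d2] by simp
    also have "\<dots> \<le> p (x + d1) - s1 + (p (y + d2) - s2)"
      using sublinear_add[OF p, of "x + d1" "y + d2"] by (simp add: algebra_simps)
    finally show "?q (x + y) - (p (y + d2) - s2) \<le> p (x + d1) - s1" by simp
  qed
  then have "?q (x + y) - ?q x \<le> ?q y"
    by (intro q_ge) (simp add: algebra_simps)
  then show ?thesis by simp
qed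

lemma cone_infimum_scaleR:
  assumes p: "sublinear p" and H: "convex_cone H" and H_le: "\<And>d s. (d, s) \<in> H \<Longrightarrow> s \<le> p d"
    and c: "0 < c"
  shows "cone_infimum p H (c *\<^sub>R x) = c * cone_infimum p H x"
proof -
  let ?q = "cone_infimum p H"
  have q_le: "?q x \<le> p (x + d) - s" if "(d, s) \<in> H" for x d s
    using p H_le that by (rule cone_infimum_le)
  note q_ge = cone_infimum_greatest[OF H]
  have "?q (c *\<^sub>R x) / c \<le> ?q x"
  proof (rule q_ge)
    fix d s assume "(d, s) \<in> H"
    then have "(c *\<^sub>R d, c * s) \<in> H"
      using convex_cone_scaleR[OF H, of c "(d, s)"] c by simp
    then have "?q (c *\<^sub>R x) \<le> p (c *\<^sub>R (x + d)) - c * s"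
      using q_le by (simp add: scaleR_add_right)
    also have "\<dots> = c * (p (x + d) - s)"
      by (simp add: sublinear_scaleR[OF p c] right_diff_distrib)
    finally show "?q (c *\<^sub>R x) / c \<le> p (x + d) - s"
      using c by (simp add: divide_le_eq mult.commute)
  qed
  moreover have "c * ?q x \<le> ?q (c *\<^sub>R x)"
  proof (rule q_ge)
    fix d s assume "(d, s) \<in> H"
    then have "(inverse c *\<^sub>R d, inverse c * s) \<in> H"
      using convex_cone_scaleR[OF H, of "inverse c" "(d, s)"] c by simp
    then have "c * ?q x \<le> c * (p (x + inverse c *\<^sub>R d) - inverse c * s)"
      using q_le c by (intro mult_left_mono) auto
    also have "\<dots> = p (c *\<^sub>R x + d) - s"
      using sublinear_scaleR[OF p c, of "x + inverse c *\<^sub>R d"] c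
      by (simp add: algebra_simps scaleR_add_right)
    finally show "c * ?q x \<le> p (c *\<^sub>R x + d) - s" .
  qed
  ultimately show ?thesis
    using c by (simp add: divide_le_eq mult.commute)
qed

lemma sublinear_sandwich:
  fixes p :: "'a::real_vector \<Rightarrow> real"
  assumes p: "sublinear p" and H: "convex_cone H"
    and H_le: "\<And>d s. (d, s) \<in> H \<Longrightarrow> s \<le> p d"
  obtains l where "linear l" "\<And>x. l x \<le> p x" "\<And>d s. (d, s) \<in> H \<Longrightarrow> s \<le> l d"
proof -
  have "sublinear (cone_infimum p H)"
    using cone_infimum_add[OF p H H_le] cone_infimum_scaleR[OF p H H_le]
    by (simp add: sublinear_def)
  then obtain l where l: "linear l" and l_le: "\<And>x. l x \<le> cone_infimum p H x"
    using sublinear_dominates_linear by blast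
  have q_le: "cone_infimum p H x \<le> p (x + d) - s" if "(d, s) \<in> H" for x d s
    using p H_le that by (rule cone_infimum_le)
  have "(0, 0) \<in> H"
    using H by (simp add: convex_cone_iff zero_prod_def)
  then have "l x \<le> p x" for x
    using l_le[of x] q_le[OF \<open>(0, 0) \<in> H\<close>, of x] by simp
  moreover have "s \<le> l d" if "(d, s) \<in> H" for d s
  proof -
    have "- l d = l (- d)" using linear_neg[OF l] by simp
    also have "\<dots> \<le> - s" using l_le[of "- d"] q_le[OF that, of "- d"] sublinear_0[OF p] by simp
    finally show ?thesis by simp
  qed
  ultimately show ?thesis using l that by blast
qed

lemma linear_le_norm_blinfun:
  fixes l :: "'a::real_normed_vector \<Rightarrow> real"
  assumes l: "linear l" and l_le: "\<And>x. l x \<le> K * norm x" and K: "0 \<le> K"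
  obtains f where "blinfun_apply f = l" "norm f \<le> K"
proof -
  have norm_le: "norm (l x) \<le> K * norm x" for x
    using l_le[of x] l_le[of "- x"] linear_neg[OF l, of x] by auto
  have "bounded_linear l"
    by (rule bounded_linear_intro[of l K])
      (use linear_add[OF l] linear_scale[OF l] norm_le in \<open>auto simp: mult.commute\<close>)
  then have "blinfun_apply (Blinfun l) = l"
    by (rule bounded_linear_Blinfun_apply)
  moreover have "norm (Blinfun l) \<le> K"
    using calculation norm_le K by (intro norm_blinfun_bound) auto
  ultimately show ?thesis by (rule that)
qed

lemma linear_prod_split_blinfun:
  fixes l :: "'a::real_normed_vector \<times> 'b::real_normed_vector \<Rightarrow> real"
  assumes l: "linear l" and l_le: "\<And>v z. l (v, z) \<le> K * (norm v + norm z)" and K: "0 \<le> K"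
  obtains g :: "'a \<Rightarrow>\<^sub>L real" and h :: "'b \<Rightarrow>\<^sub>L real"
  where "\<And>v z. l (v, z) = g v + h z" "norm g \<le> K" "norm h \<le> K"
proof -
  have "linear (\<lambda>v. l (v, 0))"
    using linear_compose[OF bounded_linear.linear[OF
        bounded_linear_Pair[OF bounded_linear_ident bounded_linear_zero]] l]
    by (simp add: o_def)
  moreover have "l (v, 0) \<le> K * norm v" for v
    using l_le[of v 0] by simp
  ultimately obtain g :: "'a \<Rightarrow>\<^sub>L real" where g: "blinfun_apply g = (\<lambda>v. l (v, 0))" "norm g \<le> K"
    using K by (rule linear_le_norm_blinfun)
  have "linear (\<lambda>z. l (0, z))"
    using linear_compose[OF bounded_linear.linear[OF
        bounded_linear_Pair[OF bounded_linear_zero bounded_linear_ident]] l]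
    by (simp add: o_def)
  moreover have "l (0, z) \<le> K * norm z" for z
    using l_le[of 0 z] by simp
  ultimately obtain h :: "'b \<Rightarrow>\<^sub>L real" where h: "blinfun_apply h = (\<lambda>z. l (0, z))" "norm h \<le> K"
    using K by (rule linear_le_norm_blinfun)
  have "l (v, z) = g v + h z" for v z
    using linear_add[OF l, of "(v, 0)" "(0, z)"] g(1) h(1) by simp
  then show ?thesis using g(2) h(2) that by blast
qed

lemma blinfun_apply_le_of_norm_le:
  fixes f :: "'a::real_normed_vector \<Rightarrow>\<^sub>L real"
  assumes "norm f \<le> 1" "norm v \<le> r"
  shows "f v \<le> r"
proof -
  have "f v \<le> norm f * norm v"
    using norm_blinfun[of f v] by simp
  also have "\<dots> \<le> r"
    using assms mult_mono[of "norm f" 1 "norm v" r] by simp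
  finally show ?thesis .
qed

lemma convex_cone_rays_minus:
  assumes K: "convex_cone K"
  shows "convex_cone {(t *\<^sub>R u - c, t) | t c. 0 \<le> t \<and> c \<in> K}"
  unfolding convex_cone_iff
proof (intro conjI ballI allI impI)
  show "0 \<in> {(t *\<^sub>R u - c, t) | t c. 0 \<le> t \<and> c \<in> K}"
    using K by (force simp: convex_cone_iff zero_prod_def)
  show "a + b \<in> {(t *\<^sub>R u - c, t) | t c. 0 \<le> t \<and> c \<in> K}"
    if ab: "a \<in> {(t *\<^sub>R u - c, t) | t c. 0 \<le> t \<and> c \<in> K}"
      "b \<in> {(t *\<^sub>R u - c, t) | t c. 0 \<le> t \<and> c \<in> K}" for a b
  proof -
    obtain t c t' c' where "a = (t *\<^sub>R u - c, t)" "b = (t' *\<^sub>R u - c', t')"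
      "0 \<le> t" "0 \<le> t'" "c \<in> K" "c' \<in> K"
      using ab by blast
    then show ?thesis
      using convex_cone_add[OF K]
      by (intro CollectI exI[of _ "t + t'"] exI[of _ "c + c'"]) (auto simp: algebra_simps)
  qed
  show "k *\<^sub>R a \<in> {(t *\<^sub>R u - c, t) | t c. 0 \<le> t \<and> c \<in> K}"
    if a: "a \<in> {(t *\<^sub>R u - c, t) | t c. 0 \<le> t \<and> c \<in> K}" and k: "0 \<le> k" for a k
  proof -
    obtain t c where "a = (t *\<^sub>R u - c, t)" "0 \<le> t" "c \<in> K"
      using a by blast
    then show ?thesis
      using convex_cone_scaleR[OF K] k
      by (intro CollectI exI[of _ "k * t"] exI[of _ "k *\<^sub>R c"]) (auto simp: algebra_simps)
  qed
qed

lemma convex_cone_separation: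
  fixes K :: "'a::real_normed_vector set"
  assumes K: "convex_cone K" and far: "\<And>c. c \<in> K \<Longrightarrow> 1 \<le> norm (u - c)"
  obtains f :: "'a \<Rightarrow>\<^sub>L real" where "norm f \<le> 1" "\<And>c. c \<in> K \<Longrightarrow> f c \<le> 0" "1 \<le> f u"
proof -
  define H where "H = {(t *\<^sub>R u - c, t) | t c. 0 \<le> t \<and> c \<in> K}"
  have "convex_cone H"
    unfolding H_def using K by (rule convex_cone_rays_minus)
  moreover have "sublinear norm"
    by (auto simp: sublinear_def norm_triangle_ineq)
  moreover have "s \<le> norm d" if "(d, s) \<in> H" for d s
  proof -
    obtain t c where d: "d = t *\<^sub>R u - c" "s = t" "0 \<le> t" "c \<in> K"
      using \<open>(d, s) \<in> H\<close> by (auto simp: H_def)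
    show ?thesis
    proof (cases "t = 0")
      case False
      then have "t * 1 \<le> t * norm (u - inverse t *\<^sub>R c)"
        using d far[OF convex_cone_scaleR[OF K, of "inverse t" c]] by simp
      also have "\<dots> = norm (t *\<^sub>R (u - inverse t *\<^sub>R c))"
        using d by simp
      also have "\<dots> = norm d"
        using d False by (simp add: scaleR_diff_right)
      finally show ?thesis using d by simp
    qed (use d in simp)
  qed
  ultimately obtain l where l: "linear l" "\<And>x. l x \<le> norm x"
    and l_H: "\<And>d s. (d, s) \<in> H \<Longrightarrow> s \<le> l d"
    using sublinear_sandwich[of norm H] by blast
  obtain f where f: "blinfun_apply f = l" "norm f \<le> 1"
    using linear_le_norm_blinfun[OF l(1), of 1] l(2) by auto
  have "f c \<le> 0" if "c \<in> K" for c
  proof -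
    have "(0 *\<^sub>R u - c, 0) \<in> H" using that by (auto simp: H_def)
    then show ?thesis using l_H linear_neg[OF l(1), of c] f(1) by fastforce
  qed
  moreover have "(1 *\<^sub>R u - 0, 1) \<in> H"
    using K by (force simp: H_def convex_cone_iff)
  then have "1 \<le> f u" using l_H f(1) by fastforce
  ultimately show ?thesis using f(2) that by blast
qed

section \<open>Tangent and normal cones of convex sets\<close>

lemma convex_add_scaleR_shrink:
  fixes C :: "'a::real_vector set"
  assumes "convex C" "a \<in> C" "a + t *\<^sub>R z \<in> C" "0 < r" "r \<le> t"
  shows "a + r *\<^sub>R z \<in> C"
proof -
  have "(1 - r / t) *\<^sub>R a + (r / t) *\<^sub>R (a + t *\<^sub>R z) \<in> C"
    using assms by (intro convexD) auto
  also have "(1 - r / t) *\<^sub>R a + (r / t) *\<^sub>R (a + t *\<^sub>R z) = a + r *\<^sub>R z"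
    using assms(4,5) by (simp add: algebra_simps)
  finally show ?thesis .
qed

lemma contingent_cone_diff:
  assumes "convex C" "a \<in> C" "c \<in> C"
  shows "c - a \<in> contingent_cone C a"
proof -
  have "a + inverse (Suc n) *\<^sub>R (c - a) \<in> C" for n
    using convex_add_scaleR_shrink[OF assms(1,2), of 1 "c - a" "inverse (Suc n)"] assms(3)
    by (simp add: inverse_le_1_iff del: of_nat_Suc)
  then show ?thesis
    unfolding contingent_cone_def using LIMSEQ_inverse_real_of_nat
    by (intro CollectI exI[of _ "\<lambda>n. c - a"] exI[of _ "\<lambda>n. inverse (Suc n)"]) auto
qed

lemma contingent_cone_scaleR:
  assumes "v \<in> contingent_cone C a" "0 < k"
  shows "k *\<^sub>R v \<in> contingent_cone C a"
proof -
  obtain vs ts where "vs \<longlonglongrightarrow> v" "ts \<longlonglongrightarrow> 0" "\<forall>n. 0 < ts n" "\<forall>n. a + ts n *\<^sub>R vs n \<in> C"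
    using assms(1) unfolding contingent_cone_def by blast
  moreover have "(\<lambda>n. ts n / k) \<longlonglongrightarrow> 0"
    using tendsto_divide_zero calculation(2) by blast
  ultimately show ?thesis
    unfolding contingent_cone_def using assms(2)
    by (intro CollectI exI[of _ "\<lambda>n. k *\<^sub>R vs n"] exI[of _ "\<lambda>n. ts n / k"])
      (auto intro: tendsto_intros)
qed

lemma contingent_cone_add:
  assumes C: "convex C" "a \<in> C"
    and "v \<in> contingent_cone C a" "w \<in> contingent_cone C a"
  shows "v + w \<in> contingent_cone C a"
proof -
  obtain vs ts where vs: "vs \<longlonglongrightarrow> v" "ts \<longlonglongrightarrow> 0" "\<forall>n. 0 < ts n" "\<forall>n. a + ts n *\<^sub>R vs n \<in> C"
    using assms(3) unfolding contingent_cone_def by blast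
  obtain ws ss where ws: "ws \<longlonglongrightarrow> w" "ss \<longlonglongrightarrow> 0" "\<forall>n. 0 < ss n" "\<forall>n. a + ss n *\<^sub>R ws n \<in> C"
    using assms(4) unfolding contingent_cone_def by blast
  define r where "r n = min (ts n) (ss n)" for n
  have r_pos: "0 < r n" for n
    using vs(3) ws(3) by (simp add: r_def)
  have "(\<lambda>n. r n / 2) \<longlonglongrightarrow> min 0 0 / 2"
    unfolding r_def using vs(2) ws(2) by (intro tendsto_intros) auto
  moreover have "a + (r n / 2) *\<^sub>R (vs n + ws n) \<in> C" for n
  proof -
    have "a + r n *\<^sub>R vs n \<in> C" "a + r n *\<^sub>R ws n \<in> C"
      using convex_add_scaleR_shrink[OF C vs(4)[rule_format, of n] r_pos[of n]]
        convex_add_scaleR_shrink[OF C ws(4)[rule_format, of n] r_pos[of n]]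
      by (simp_all add: r_def)
    then have "(1/2) *\<^sub>R (a + r n *\<^sub>R vs n) + (1/2) *\<^sub>R (a + r n *\<^sub>R ws n) \<in> C"
      using C(1) by (intro convexD) auto
    also have "(1/2) *\<^sub>R (a + r n *\<^sub>R vs n) + (1/2) *\<^sub>R (a + r n *\<^sub>R ws n)
        = a + (r n / 2) *\<^sub>R (vs n + ws n)"
      by (simp add: algebra_simps flip: scaleR_add_left)
    finally show ?thesis .
  qed
  ultimately show ?thesis
    unfolding contingent_cone_def using r_pos vs(1) ws(1)
    by (intro CollectI exI[of _ "\<lambda>n. vs n + ws n"] exI[of _ "\<lambda>n. r n / 2"])
      (auto intro: tendsto_intros)
qed

lemma convex_cone_contingent_cone:
  assumes "convex C" "a \<in> C"
  shows "convex_cone (contingent_cone C a)"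
  unfolding convex_cone_iff
proof (intro conjI ballI allI impI)
  show zero: "0 \<in> contingent_cone C a"
    using contingent_cone_diff[OF assms assms(2)] by simp
  show "v + w \<in> contingent_cone C a" if "v \<in> contingent_cone C a" "w \<in> contingent_cone C a" for v w
    using contingent_cone_add[OF assms that] .
  show "c *\<^sub>R v \<in> contingent_cone C a" if "v \<in> contingent_cone C a" "0 \<le> c" for v c
    using that zero contingent_cone_scaleR[of v C a c] by (cases "c = 0") auto
qed

lemma convex_cone_coupled_pairs:
  fixes f :: "'a::real_vector \<Rightarrow> real"
  assumes P: "convex_cone P" and Q: "convex_cone Q" and f: "linear f"
  shows "convex_cone {((v, z), f u) | u v z. (u, v) \<in> P \<and> u - z \<in> Q}"
  (is "convex_cone ?H")
  unfolding convex_cone_iff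
proof (intro conjI ballI allI impI)
  show "0 \<in> ?H"
    using P Q linear_0[OF f] unfolding convex_cone_iff zero_prod_def
    by (intro CollectI exI[of _ 0] exI[of _ 0] exI[of _ 0]) auto
  show "a + b \<in> ?H" if ab: "a \<in> ?H" "b \<in> ?H" for a b
  proof -
    obtain u v z u' v' z' where uvz: "a = ((v, z), f u)" "(u, v) \<in> P" "u - z \<in> Q"
      "b = ((v', z'), f u')" "(u', v') \<in> P" "u' - z' \<in> Q"
      using ab by blast
    have "(u + u', v + v') \<in> P" "(u + u') - (z + z') \<in> Q"
      using convex_cone_add[OF P uvz(2,5)] convex_cone_add[OF Q uvz(3,6)]
      by (simp_all add: algebra_simps)
    then show ?thesis
      using uvz(1,4) linear_add[OF f]
      by (intro CollectI exI[of _ "u + u'"] exI[of _ "v + v'"] exI[of _ "z + z'"]) simp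
  qed
  show "k *\<^sub>R a \<in> ?H" if a: "a \<in> ?H" and k: "0 \<le> k" for a k
  proof -
    obtain u v z where uvz: "a = ((v, z), f u)" "(u, v) \<in> P" "u - z \<in> Q"
      using a by blast
    have "(k *\<^sub>R u, k *\<^sub>R v) \<in> P" "k *\<^sub>R u - k *\<^sub>R z \<in> Q"
      using convex_cone_scaleR[OF P k uvz(2)] convex_cone_scaleR[OF Q k uvz(3)]
      by (simp_all add: scaleR_diff_right)
    then show ?thesis
      using uvz(1) linear_scale[OF f]
      by (intro CollectI exI[of _ "k *\<^sub>R u"] exI[of _ "k *\<^sub>R v"] exI[of _ "k *\<^sub>R z"]) simp
  qed
qed

lemma contingent_cone_le_0:
  assumes f: "bounded_linear f" and le: "\<And>c. c \<in> C \<Longrightarrow> f (c - a) \<le> (0::real)"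
    and v: "v \<in> contingent_cone C a"
  shows "f v \<le> 0"
proof -
  obtain vs ts where vs: "vs \<longlonglongrightarrow> v" "\<forall>n. 0 < ts n" "\<forall>n. a + ts n *\<^sub>R vs n \<in> C"
    using v unfolding contingent_cone_def by blast
  have "f (vs n) \<le> 0" for n
  proof -
    have "ts n * f (vs n) \<le> 0"
      using le[OF vs(3)[rule_format, of n]] linear_scale[OF bounded_linear.linear[OF f]] by simp
    then show ?thesis using vs(2)[rule_format, of n] by (simp add: mult_le_0_iff)
  qed
  moreover have "(\<lambda>n. f (vs n)) \<longlonglongrightarrow> f v"
    using bounded_linear.tendsto[OF f vs(1)] .
  ultimately show ?thesis
    using LIMSEQ_le_const2 by blast
qed

lemma normal_cone_contingent_cone_le:
  assumes "xs \<in> normal_cone C a" "v \<in> contingent_cone C a"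
  shows "xs v \<le> 0"
  using contingent_cone_le_0[OF blinfun.bounded_linear_right _ assms(2)] assms(1)
  by (auto simp: normal_cone_def)

lemma normal_cone_iff_contingent_cone:
  assumes "convex C" "a \<in> C"
  shows "xs \<in> normal_cone C a \<longleftrightarrow> (\<forall>v\<in>contingent_cone C a. xs v \<le> 0)"
  using normal_cone_contingent_cone_le contingent_cone_diff[OF assms]
  by (fastforce simp: normal_cone_def)

lemma coderiv_contingent_cone_le:
  assumes "xs \<in> coderiv F x y ys" "(u, v) \<in> contingent_cone (gph F) (x, y)"
  shows "xs u \<le> ys v"
proof -
  have "(\<lambda>(u, v). xs u - ys v) (u, v) \<le> 0"
  proof (rule contingent_cone_le_0[OF _ _ assms(2)])
    show "bounded_linear (\<lambda>(u, v). xs u - ys v)"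
      unfolding case_prod_beta' by (intro bounded_linear_intros)
    show "(\<lambda>(u, v). xs u - ys v) (c - (x, y)) \<le> 0" if "c \<in> gph F" for c
      using assms(1) that by (auto simp: coderiv_def blinfun.minus_left)
  qed
  then show ?thesis by simp
qed

lemma convex_fiber:
  assumes "convex (gph F)"
  shows "convex {x. y \<in> F x}"
proof (rule convexI)
  fix a b and u v :: real
  assume "a \<in> {x. y \<in> F x}" "b \<in> {x. y \<in> F x}" "0 \<le> u" "0 \<le> v" "u + v = 1"
  then have "(u *\<^sub>R a + v *\<^sub>R b, u *\<^sub>R y + v *\<^sub>R y) \<in> gph F"
    using convexD[OF assms, of "(a, y)" "(b, y)" u v] by (simp add: gph_def)
  then show "u *\<^sub>R a + v *\<^sub>R b \<in> {x. y \<in> F x}"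
    using \<open>u + v = 1\<close> by (simp add: gph_def flip: scaleR_add_left)
qed

lemma mem_sscale_cball_iff:
  fixes w :: "'a::real_normed_vector"
  assumes "0 \<le> r"
  shows "w \<in> sscale r (cball 0 1) \<longleftrightarrow> norm w \<le> r"
proof
  assume "w \<in> sscale r (cball 0 1)"
  then obtain z where "w = r *\<^sub>R z" "z \<in> cball 0 1" unfolding sscale_def by blast
  then show "norm w \<le> r"
    using assms mult_left_le[of "norm z" r] by simp
next
  assume w: "norm w \<le> r"
  show "w \<in> sscale r (cball 0 1)"
  proof (cases "r = 0")
    case True
    then show ?thesis using w unfolding sscale_def by (intro image_eqI[of _ _ 0]) auto
  next
    case False
    then have "w = r *\<^sub>R (inverse r *\<^sub>R w)" "norm (inverse r *\<^sub>R w) \<le> 1"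
      using assms w by (auto simp: field_simps)
    then show ?thesis unfolding sscale_def by (intro image_eqI[of _ _ "inverse r *\<^sub>R w"]) auto
  qed
qed

section \<open>Pointwise duality of the tangential and the dual condition\<close>

definition tangent_estimate ::
  "('a::real_normed_vector \<Rightarrow> 'b::real_normed_vector set) \<Rightarrow> 'a set \<Rightarrow> 'b \<Rightarrow> 'a \<Rightarrow> real \<Rightarrow> bool"
  where "tangent_estimate F A y x \<eta> \<longleftrightarrow>
    (\<forall>\<eta>1 \<eta>2. \<eta>1 \<ge> 0 \<and> \<eta>2 \<ge> 0 \<and> \<eta>1 + \<eta>2 < \<eta> \<longrightarrow>
       graph_deriv_inv_set F y x (sscale \<eta>1 (cball 0 1))
         \<inter> msum (contingent_cone A x) (sscale \<eta>2 (cball 0 1))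
       \<subseteq> msum (contingent_cone ({x. y \<in> F x} \<inter> A) x) (cball 0 1))"

definition normal_estimate ::
  "('a::real_normed_vector \<Rightarrow> 'b::real_normed_vector set) \<Rightarrow> 'a set \<Rightarrow> 'b \<Rightarrow> 'a \<Rightarrow> real \<Rightarrow> bool"
  where "normal_estimate F A y x \<tau> \<longleftrightarrow>
    normal_cone ({x. y \<in> F x} \<inter> A) x \<inter> cball 0 1
      \<subseteq> sscale \<tau> (msum (coderiv_set F x y (cball 0 1)) (normal_cone A x \<inter> cball 0 1))"

lemma normal_estimate_tangent_bound:
  fixes F :: "'a::real_normed_vector \<Rightarrow> 'b::real_normed_vector set"
  assumes \<tau>: "0 < \<tau>" and est: "normal_estimate F A y x \<tau>"
    and f: "f \<in> normal_cone ({x. y \<in> F x} \<inter> A) x" "norm f \<le> 1"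
    and \<eta>: "0 \<le> \<eta>1" "0 \<le> \<eta>2"
    and u: "u \<in> graph_deriv_inv_set F y x (sscale \<eta>1 (cball 0 1))
              \<inter> msum (contingent_cone A x) (sscale \<eta>2 (cball 0 1))"
  shows "f u \<le> \<tau> * (\<eta>1 + \<eta>2)"
proof -
  obtain a b ys where ab: "f = \<tau> *\<^sub>R (a + b)" "a \<in> coderiv F x y ys" "norm ys \<le> 1"
    "b \<in> normal_cone A x" "norm b \<le> 1"
    using est f unfolding normal_estimate_def sscale_def msum_def coderiv_set_def by fastforce
  obtain v where v: "norm v \<le> \<eta>1" "(u, v) \<in> contingent_cone (gph F) (x, y)"
    using u \<eta> mem_sscale_cball_iff
    by (auto simp: graph_deriv_inv_set_def graph_deriv_inv_def)
  obtain w z where wz: "u = w + z" "w \<in> contingent_cone A x" "norm z \<le> \<eta>2"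
    using u \<eta> mem_sscale_cball_iff by (auto simp: msum_def)
  have "a u \<le> \<eta>1"
    using coderiv_contingent_cone_le[OF ab(2) v(2)] blinfun_apply_le_of_norm_le[OF ab(3) v(1)]
    by simp
  moreover have "b u \<le> \<eta>2"
    using normal_cone_contingent_cone_le[OF ab(4) wz(2)]
      blinfun_apply_le_of_norm_le[OF ab(5) wz(3)] wz(1) by (simp add: blinfun.add_right)
  moreover have "f u = \<tau> * (a u + b u)"
    using ab(1) by (simp add: scaleR_blinfun.rep_eq plus_blinfun.rep_eq)
  ultimately show ?thesis
    using \<tau> by (simp add: mult_left_mono)
qed

lemma normal_estimate_imp_tangent_estimate:
  fixes F :: "'a::real_normed_vector \<Rightarrow> 'b::real_normed_vector set"
  assumes G: "convex (gph F)" and A: "convex A" and x: "x \<in> {x. y \<in> F x} \<inter> A"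
    and \<tau>: "0 < \<tau>" and est: "normal_estimate F A y x \<tau>"
  shows "tangent_estimate F A y x (1 / \<tau>)"
  unfolding tangent_estimate_def
proof (intro allI impI subsetI)
  define S where "S = {x. y \<in> F x} \<inter> A"
  have S: "convex S" "x \<in> S"
    using convex_fiber[OF G] A x by (auto simp: S_def intro: convex_Int)
  fix \<eta>1 \<eta>2 u
  assume \<eta>: "\<eta>1 \<ge> 0 \<and> \<eta>2 \<ge> 0 \<and> \<eta>1 + \<eta>2 < 1 / \<tau>"
    and u: "u \<in> graph_deriv_inv_set F y x (sscale \<eta>1 (cball 0 1))
              \<inter> msum (contingent_cone A x) (sscale \<eta>2 (cball 0 1))"
  show "u \<in> msum (contingent_cone S x) (cball 0 1)"
  proof (rule ccontr)
    assume u_far: "u \<notin> msum (contingent_cone S x) (cball 0 1)"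
    have "1 \<le> norm (u - c)" if "c \<in> contingent_cone S x" for c
    proof (rule ccontr)
      assume "\<not> 1 \<le> norm (u - c)"
      then have "c + (u - c) \<in> msum (contingent_cone S x) (cball 0 1)"
        using that unfolding msum_def by (intro CollectI exI[of _ c] exI[of _ "u - c"]) simp
      then show False using u_far by simp
    qed
    then obtain f :: "'a \<Rightarrow>\<^sub>L real"
      where f: "norm f \<le> 1" "\<And>c. c \<in> contingent_cone S x \<Longrightarrow> f c \<le> 0" "1 \<le> f u"
      using convex_cone_separation[OF convex_cone_contingent_cone[OF S]] by blast
    then have "f \<in> normal_cone S x"
      using normal_cone_iff_contingent_cone[OF S] by simp
    then have "f u \<le> \<tau> * (\<eta>1 + \<eta>2)"
      using normal_estimate_tangent_bound[OF \<tau> est _ f(1)] \<eta> u by (simp add: S_def)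
    also have "\<dots> < 1"
      using \<eta> \<tau> by (simp add: field_simps)
    finally show False using f(3) by simp
  qed
qed

lemma tangent_estimate_scaled_bound:
  fixes F :: "'a::real_normed_vector \<Rightarrow> 'b::real_normed_vector set"
  assumes est: "tangent_estimate F A y x \<eta>"
    and f: "f \<in> normal_cone ({x. y \<in> F x} \<inter> A) x" "norm f \<le> 1"
    and uv: "(u, v) \<in> contingent_cone (gph F) (x, y)" and uz: "u - z \<in> contingent_cone A x"
    and s: "0 < s" "s * (norm v + norm z) < \<eta>"
  shows "s * f u \<le> 1"
proof -
  have "s *\<^sub>R u \<in> graph_deriv_inv_set F y x (sscale (s * norm v) (cball 0 1))"
    using contingent_cone_scaleR[OF uv s(1)] s(1) mem_sscale_cball_iff[of "s * norm v" "s *\<^sub>R v"]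
    by (auto simp: graph_deriv_inv_set_def graph_deriv_inv_def)
  moreover have "s *\<^sub>R u \<in> msum (contingent_cone A x) (sscale (s * norm z) (cball 0 1))"
  proof -
    have "s *\<^sub>R u = s *\<^sub>R (u - z) + s *\<^sub>R z" by (simp add: scaleR_diff_right)
    then show ?thesis
      using contingent_cone_scaleR[OF uz s(1)] s(1) mem_sscale_cball_iff[of "s * norm z" "s *\<^sub>R z"]
      unfolding msum_def by auto
  qed
  moreover have "s * norm v + s * norm z < \<eta>"
    using s by (simp add: distrib_left)
  ultimately have "s *\<^sub>R u \<in> msum (contingent_cone ({x. y \<in> F x} \<inter> A) x) (cball 0 1)"
    using est[unfolded tangent_estimate_def, rule_format, of "s * norm v" "s * norm z"] s(1)
    by auto
  then obtain t b where tb: "s *\<^sub>R u = t + b" "b \<in> cball 0 1"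
    "t \<in> contingent_cone ({x. y \<in> F x} \<inter> A) x"
    unfolding msum_def by blast
  have "s * f u = f t + f b"
    using tb(1) by (metis blinfun.add_right blinfun.scaleR_right real_scaleR_def)
  also have "\<dots> \<le> 0 + 1"
    using normal_cone_contingent_cone_le[OF f(1) tb(3)] blinfun_apply_le_of_norm_le[OF f(2), of b 1] tb(2)
    by (intro add_mono) auto
  finally show ?thesis by simp
qed

lemma tangent_estimate_normal_bound:
  fixes F :: "'a::real_normed_vector \<Rightarrow> 'b::real_normed_vector set"
  assumes \<tau>: "0 < \<tau>" "1 / \<tau> < \<eta>" and est: "tangent_estimate F A y x \<eta>"
    and f: "f \<in> normal_cone ({x. y \<in> F x} \<inter> A) x" "norm f \<le> 1"
    and uv: "(u, v) \<in> contingent_cone (gph F) (x, y)" and uz: "u - z \<in> contingent_cone A x"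
  shows "f u \<le> \<tau> * (norm v + norm z)"
proof -
  define N where "N = norm v + norm z"
  note scaled = tangent_estimate_scaled_bound[OF est f uv uz, folded N_def]
  have "0 < \<eta>"
    using \<tau> by (meson divide_pos_pos less_trans zero_less_one)
  show ?thesis
  proof (cases "N = 0")
    case True
    have "\<not> 0 < f u"
    proof
      assume "0 < f u"
      then show False using scaled[of "2 / f u"] True \<open>0 < \<eta>\<close> by simp
    qed
    then show ?thesis using True by (simp add: N_def)
  next
    case False
    then have "0 < \<tau> * N"
      using \<tau>(1) norm_ge_zero[of v] norm_ge_zero[of z] unfolding N_def
      by (intro mult_pos_pos) linarith+
    moreover have "1 / (\<tau> * N) * N = 1 / \<tau>"
      using False by simp
    ultimately have "1 / (\<tau> * N) * f u \<le> 1"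
      using scaled[of "1 / (\<tau> * N)"] \<tau> by simp
    then show ?thesis using \<open>0 < \<tau> * N\<close> by (simp add: N_def field_simps)
  qed
qed

lemma coderiv_normal_sum_memI:
  fixes F :: "'a::real_normed_vector \<Rightarrow> 'b::real_normed_vector set"
    and f h :: "'a \<Rightarrow>\<^sub>L real" and g :: "'b \<Rightarrow>\<^sub>L real"
  assumes G: "convex (gph F)" and A: "convex A" and x: "x \<in> {x. y \<in> F x} \<inter> A"
    and \<tau>: "0 < \<tau>" and g: "norm g \<le> \<tau>" and h: "norm h \<le> \<tau>"
    and f_le: "\<And>u v. (u, v) \<in> contingent_cone (gph F) (x, y) \<Longrightarrow> f u \<le> g v + h u"
    and h_le: "\<And>w. w \<in> contingent_cone A x \<Longrightarrow> h w \<le> 0"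
  shows "f \<in> sscale \<tau> (msum (coderiv_set F x y (cball 0 1)) (normal_cone A x \<inter> cball 0 1))"
proof -
  have xG: "(x, y) \<in> gph F" and xA: "x \<in> A"
    using x by (auto simp: gph_def)
  let ?a = "inverse \<tau> *\<^sub>R (f - h)" and ?b = "inverse \<tau> *\<^sub>R h"
  have "?a \<in> coderiv F x y (inverse \<tau> *\<^sub>R g)"
    unfolding coderiv_def
  proof (intro CollectI ballI, clarify)
    fix u v assume "(u, v) \<in> gph F"
    then have "f (u - x) - h (u - x) - g (v - y) \<le> 0"
      using f_le contingent_cone_diff[OF G xG] by fastforce
    then have "inverse \<tau> * (f (u - x) - h (u - x) - g (v - y)) \<le> 0"
      using \<tau> by (simp add: mult_nonneg_nonpos)
    then show "?a (u - x) + (- (inverse \<tau> *\<^sub>R g)) (v - y) \<le> 0"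
      by (simp add: scaleR_blinfun.rep_eq minus_blinfun.rep_eq uminus_blinfun.rep_eq algebra_simps)
  qed
  moreover have "norm (inverse \<tau> *\<^sub>R g) \<le> 1" "norm ?b \<le> 1"
    using g h \<tau> by (auto simp: field_simps)
  moreover have "?b \<in> normal_cone A x"
    using normal_cone_iff_contingent_cone[OF A xA] h_le \<tau>
    by (auto simp: scaleR_blinfun.rep_eq mult_nonneg_nonpos)
  moreover have "f = \<tau> *\<^sub>R (?a + ?b)"
    using \<tau> by (simp add: algebra_simps)
  ultimately show ?thesis
    unfolding sscale_def msum_def coderiv_set_def by fastforce
qed

lemma tangent_estimate_imp_normal_estimate:
  fixes F :: "'a::real_normed_vector \<Rightarrow> 'b::real_normed_vector set"
  assumes G: "convex (gph F)" and A: "convex A" and x: "x \<in> {x. y \<in> F x} \<inter> A"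
    and \<tau>: "0 < \<tau>" "1 / \<tau> < \<eta>" and est: "tangent_estimate F A y x \<eta>"
  shows "normal_estimate F A y x \<tau>"
  unfolding normal_estimate_def
proof (intro subsetI)
  fix f assume f: "f \<in> normal_cone ({x. y \<in> F x} \<inter> A) x \<inter> cball 0 1"
  define TG where "TG = contingent_cone (gph F) (x, y)"
  define TA where "TA = contingent_cone A x"
  have xG: "(x, y) \<in> gph F" and xA: "x \<in> A"
    using x by (auto simp: gph_def)
  define H :: "(('b \<times> 'a) \<times> real) set"
    where "H = {((v, z), f u) | u v z. (u, v) \<in> TG \<and> u - z \<in> TA}"
  define p :: "'b \<times> 'a \<Rightarrow> real" where "p w = \<tau> * (norm (fst w) + norm (snd w))" for w
  have TG: "convex_cone TG" and TA: "convex_cone TA"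
    using convex_cone_contingent_cone G A xG xA by (auto simp: TG_def TA_def)
  have "convex_cone H"
    unfolding H_def using TG TA bounded_linear.linear[OF blinfun.bounded_linear_right]
    by (rule convex_cone_coupled_pairs)
  moreover have "sublinear p"
    using sublinear_scaled_norm_sum[of \<tau>] \<tau>(1) by (simp add: p_def[abs_def])
  moreover have "s \<le> p d" if "(d, s) \<in> H" for d s
    using that tangent_estimate_normal_bound[OF \<tau> est] f by (auto simp: H_def TG_def TA_def p_def)
  ultimately obtain l where l: "linear l" "\<And>w. l w \<le> p w"
    and l_H: "\<And>d s. (d, s) \<in> H \<Longrightarrow> s \<le> l d"
    using sublinear_sandwich[of p H] by blast
  have l_le: "l (v, z) \<le> \<tau> * (norm v + norm z)" for v z
    using l(2)[of "(v, z)"] by (simp add: p_def)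
  obtain g :: "'b \<Rightarrow>\<^sub>L real" and h :: "'a \<Rightarrow>\<^sub>L real"
    where gh: "\<And>v z. l (v, z) = g v + h z" "norm g \<le> \<tau>" "norm h \<le> \<tau>"
    using linear_prod_split_blinfun[OF l(1) l_le] \<tau>(1) by auto
  have "(0, 0) \<in> TG" "0 \<in> TA"
    using TG TA by (auto simp: convex_cone_iff zero_prod_def)
  have f_le: "f u \<le> g v + h u" if "(u, v) \<in> TG" for u v
  proof -
    have "((v, u), f u) \<in> H"
      unfolding H_def using that \<open>0 \<in> TA\<close> by force
    then show ?thesis using l_H gh(1) by fastforce
  qed
  have h_le: "h w \<le> 0" if "w \<in> TA" for w
  proof -
    have "((0, - w), f 0) \<in> H"
      unfolding H_def using that \<open>(0, 0) \<in> TG\<close> by force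
    then show ?thesis using l_H gh(1) by (fastforce simp: blinfun.minus_right)
  qed
  show "f \<in> sscale \<tau> (msum (coderiv_set F x y (cball 0 1)) (normal_cone A x \<inter> cball 0 1))"
    using coderiv_normal_sum_memI[OF G A x \<tau>(1) gh(2,3)] f_le h_le by (simp add: TG_def TA_def)
qed

section \<open>The modulus and its dual expression\<close>

lemma ereal_recip_Sup_eq_Inf:
  fixes E T :: "real set"
  assumes E_pos: "\<And>\<eta>. \<eta> \<in> E \<Longrightarrow> 0 < \<eta>"
    and T_E: "\<And>\<tau>. \<tau> \<in> T \<Longrightarrow> 0 < \<tau> \<and> 1 / \<tau> \<in> E"
    and E_T: "\<And>\<eta> \<tau>. \<eta> \<in> E \<Longrightarrow> 0 < \<tau> \<Longrightarrow> 1 / \<tau> < \<eta> \<Longrightarrow> \<tau> \<in> T"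
  shows "ereal_recip (if E = {} then 0 else Sup (ereal ` E)) = Inf (ereal ` T)"
proof (cases "E = {}")
  case True
  then have "T = {}" using T_E by blast
  then show ?thesis using True by (simp add: ereal_recip_def top_ereal_def)
next
  case False
  define s where "s = Sup (ereal ` E)"
  obtain \<eta>0 where "\<eta>0 \<in> E" using False by blast
  then have "ereal \<eta>0 \<le> s" "0 < \<eta>0"
    using E_pos by (auto simp: s_def intro: SUP_upper)
  then have "0 < s" by (metis ereal_less(2) order_less_le_trans)
  have "ereal_recip s \<le> Inf (ereal ` T)"
  proof (rule Inf_greatest, clarify)
    fix \<tau> assume "\<tau> \<in> T"
    then have "0 < \<tau>" "ereal (1 / \<tau>) \<le> s"
      using T_E by (auto simp: s_def intro: SUP_upper)
    then show "ereal_recip s \<le> ereal \<tau>"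
      using \<open>0 < s\<close> by (cases s) (auto simp: ereal_recip_def one_ereal_def ereal_divide field_simps)
  qed
  moreover have "Inf (ereal ` T) \<le> ereal_recip s"
  proof (rule dense_ge)
    fix c assume c: "ereal_recip s < c"
    show "Inf (ereal ` T) \<le> c"
    proof (cases c)
      case (real c')
      have "0 \<le> ereal_recip s"
        using \<open>0 < s\<close> by (cases s) (auto simp: ereal_recip_def)
      then have "0 < c'" using c real by (metis ereal_less(2) order_le_less_trans)
      moreover have "ereal (1 / c') < s"
        using c real \<open>0 < s\<close> \<open>0 < c'\<close>
        by (cases s) (auto simp: ereal_recip_def one_ereal_def ereal_divide field_simps)
      then obtain \<eta> where "\<eta> \<in> E" "1 / c' < \<eta>"
        by (auto simp: s_def less_SUP_iff)
      ultimately have "c' \<in> T" using E_T by blast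
      then show ?thesis using real by (simp add: Inf_lower)
    qed (use c in auto)
  qed
  ultimately show ?thesis using False by (simp add: s_def)
qed

theorem proposition4p1:
  fixes F :: "'a::banach \<Rightarrow> 'b::banach set"
    and A :: "'a set" and ybar :: 'b and xbar :: 'a
  assumes "closed (gph F)" and "convex (gph F)"
    and "closed A" and "convex A"
    and "xbar \<in> {x. ybar \<in> F x} \<inter> A"
  shows "ereal_recip (eta_A F A xbar ybar) =
    Inf (ereal ` {\<tau>. \<tau> > 0 \<and> (\<exists>\<delta>>0. \<forall>x \<in> ({x. ybar \<in> F x} \<inter> A) \<inter> ball xbar \<delta>.
       normal_cone ({x. ybar \<in> F x} \<inter> A) x \<inter> cball 0 1
       \<subseteq> sscale \<tau> (msum (coderiv_set F x ybar (cball 0 1)) (normal_cone A x \<inter> cball 0 1)))})"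
proof -
  let ?S = "{x. ybar \<in> F x} \<inter> A"
  note G = \<open>convex (gph F)\<close> and A = \<open>convex A\<close>
  have E: "eta_set F A xbar ybar
      = {\<eta>. 0 < \<eta> \<and> (\<exists>\<delta>>0. \<forall>x\<in>?S \<inter> ball xbar \<delta>. tangent_estimate F A ybar x \<eta>)}"
    by (simp add: eta_set_def tangent_estimate_def)
  show ?thesis
    unfolding eta_A_def normal_estimate_def[symmetric]
  proof (rule ereal_recip_Sup_eq_Inf)
    show "0 < \<eta>" if "\<eta> \<in> eta_set F A xbar ybar" for \<eta>
      using that by (simp add: E)
    show "0 < \<tau> \<and> 1 / \<tau> \<in> eta_set F A xbar ybar"
      if "\<tau> \<in> {\<tau>. 0 < \<tau> \<and> (\<exists>\<delta>>0. \<forall>x\<in>?S \<inter> ball xbar \<delta>. normal_estimate F A ybar x \<tau>)}" for \<tau>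
      using that normal_estimate_imp_tangent_estimate[OF G A] by (auto simp: E)
    show "\<tau> \<in> {\<tau>. 0 < \<tau> \<and> (\<exists>\<delta>>0. \<forall>x\<in>?S \<inter> ball xbar \<delta>. normal_estimate F A ybar x \<tau>)}"
      if "\<eta> \<in> eta_set F A xbar ybar" "0 < \<tau>" "1 / \<tau> < \<eta>" for \<eta> \<tau>
      using that tangent_estimate_imp_normal_estimate[OF G A] by (auto simp: E)
  qed
qed

end
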